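(* Let $X_0,Y_0$ be random vectors in $\mathbb R^p$ that are absolutely continuous w.r.t. Lebesgue measure, and let $f:\mathbb R^p\to\mathbb R^n$ be $L$-Lipschitz. Let $\Sigma\in\mathbb R^{n\times n}$ be positive definite, and let $X_1,Y_1$ be random vectors in $\mathbb R^n$ with $X_1\mid X_0\sim N(f(X_0),\Sigma)$ and $Y_1\mid Y_0\sim N(f(Y_0),\Sigma)$. Then $$\|\mathsf P_{X_1}-\mathsf P_{Y_1}\|_{\mathsf{TV}}\le\frac{L\sqrt{\mathrm{tr}(\Sigma^{-1})}}{2}W_1(\mathsf P_{X_0},\mathsf P_{Y_0}).$$
   Context: $\mathsf P_Z$ denotes the law of $Z$. $\|\mu-\nu\|_{\mathsf{TV}}=\sup_A|\mu(A)-\nu(A)|$. The $1$-Wasserstein distance is $W_1(\mu,\nu)=\inf\{\mathbb{E}\|X-Y\|_2:(X,Y)\text{ a coupling of }(\mu,\nu)\}$. *)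

theory Defs
  imports "HOL-Probability.Probability"
begin

definition pos_def_mat :: "real^'n^'n \<Rightarrow> bool" where
  "pos_def_mat S \<longleftrightarrow> transpose S = S \<and> (\<forall>x. x \<noteq> 0 \<longrightarrow> x \<bullet> (S *v x) > 0)"

definition gaussian_vec :: "real^'n \<Rightarrow> real^'n^'n \<Rightarrow> (real^'n) measure" where
  "gaussian_vec m S = density lborel (\<lambda>y. ennreal
     ((2 * pi) powr (- real CARD('n) / 2) * (det S) powr (-1/2)
      * exp (- (1/2) * ((y - m) \<bullet> (matrix_inv S *v (y - m))))))"

definition tv_dist :: "'a measure \<Rightarrow> 'a measure \<Rightarrow> real" where
  "tv_dist \<mu> \<nu> = (SUP A \<in> sets \<mu>. \<bar>measure \<mu> A - measure \<nu> A\<bar>)"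

definition couplings :: "('a::real_normed_vector) measure \<Rightarrow> 'a measure \<Rightarrow> ('a \<times> 'a) measure set" where
  "couplings \<mu> \<nu> = {\<gamma>. prob_space \<gamma> \<and> sets \<gamma> = sets (borel \<Otimes>\<^sub>M borel)
      \<and> distr \<gamma> borel fst = \<mu> \<and> distr \<gamma> borel snd = \<nu>}"

definition wasserstein1 :: "('a::real_normed_vector) measure \<Rightarrow> 'a measure \<Rightarrow> ennreal" where
  "wasserstein1 \<mu> \<nu> = (INF \<gamma> \<in> couplings \<mu> \<nu>. \<integral>\<^sup>+ z. ennreal (norm (fst z - snd z)) \<partial>\<gamma>)"

end

theory Submission
  imports Defs
begin

text \<open>
  For a Borel set B let g(x) = N(f x, \<Sigma>)(B). Then P(X1 \<in> B) - P(Y1 \<in> B) = E g(X) - E g(Y) for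
  every coupling (X, Y) of the laws of X0 and Y0, so it suffices that g is Lipschitz with constant
  L sqrt(tr \<Sigma>^-1) / 2, i.e. that |N(a, \<Sigma>)(B) - N(b, \<Sigma>)(B)| \<le> sqrt(tr \<Sigma>^-1) |a - b| / 2.
  With R = (a - b)^T \<Sigma>^-1 (a - b), completing the square shows that the Bhattacharyya coefficient
  \<integral> sqrt(\<phi>_a \<phi>_b) of the two Gaussian densities equals exp(-R/8). Cauchy-Schwarz on B and on its
  complement bounds it by sqrt(x y) + sqrt((1 - x)(1 - y)), where x, y are the two probabilities of B,
  and this forces (x - y)^2 \<le> 1 - exp(-R/4) \<le> R/4. Finally R \<le> tr(\<Sigma>^-1) |a - b|^2, since the
  quadratic form of a positive semidefinite matrix is bounded by its trace.
\<close>

section \<open>Positive semidefinite matrices\<close>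

definition pos_semidef_mat :: "real^'n^'n \<Rightarrow> bool" where
  "pos_semidef_mat A \<longleftrightarrow> transpose A = A \<and> (\<forall>x. 0 \<le> x \<bullet> (A *v x))"

lemma pos_def_mat_matrix_inv:
  fixes S :: "real^'n^'n"
  assumes "pos_def_mat S"
  shows "S ** matrix_inv S = mat 1" "matrix_inv S ** S = mat 1"
proof -
  have "inj ((*v) S)"
  proof (rule injI)
    fix x y assume "S *v x = S *v y"
    then have "(x - y) \<bullet> (S *v (x - y)) = 0"
      by (simp add: matrix_vector_mult_diff_distrib)
    then show "x = y"
      using assms unfolding pos_def_mat_def by (metis less_irrefl right_minus_eq)
  qed
  then obtain B where "B ** S = mat 1"
    using matrix_left_invertible_injective by blast
  then have "\<exists>A'. S ** A' = mat 1 \<and> A' ** S = mat 1"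
    using matrix_left_right_inverse by blast
  from someI_ex[OF this] show "S ** matrix_inv S = mat 1" "matrix_inv S ** S = mat 1"
    unfolding matrix_inv_def by auto
qed

lemma pos_def_mat_imp_pos_semidef_inv:
  fixes S :: "real^'n^'n"
  assumes "pos_def_mat S"
  shows "pos_semidef_mat (matrix_inv S)"
  unfolding pos_semidef_mat_def
proof
  let ?T = "matrix_inv S"
  have S_sym: "transpose S = S"
    using assms unfolding pos_def_mat_def by simp
  have "transpose ?T ** S = mat 1"
    using arg_cong[OF pos_def_mat_matrix_inv(1)[OF assms], of transpose]
    by (simp add: matrix_transpose_mul S_sym transpose_mat)
  then have "transpose ?T = transpose ?T ** (S ** ?T)"
    by (simp add: pos_def_mat_matrix_inv(1)[OF assms] matrix_mul_assoc)
  then show "transpose ?T = ?T"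
    using \<open>transpose ?T ** S = mat 1\<close> by (simp add: matrix_mul_assoc)
  show "\<forall>x. 0 \<le> x \<bullet> (?T *v x)"
  proof
    fix x
    let ?w = "?T *v x"
    have "x = S *v ?w"
      by (simp add: pos_def_mat_matrix_inv(1)[OF assms] matrix_vector_mul_assoc)
    then have "x \<bullet> ?w = ?w \<bullet> (S *v ?w)"
      by (metis inner_commute)
    also have "\<dots> \<ge> 0"
      using assms unfolding pos_def_mat_def by (cases "?w = 0") (auto intro: less_imp_le)
    finally show "0 \<le> x \<bullet> ?w" .
  qed
qed

lemma pos_semidef_mat_diag_nonneg:
  assumes "pos_semidef_mat A"
  shows "0 \<le> A $ i $ i"
proof -
  have "axis i 1 \<bullet> (A *v axis i 1) = A $ i $ i"
    by (simp add: inner_axis' matrix_vector_mult_basis column_def)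
  then show ?thesis
    using assms unfolding pos_semidef_mat_def by metis
qed

lemma pos_semidef_mat_trace_nonneg: "pos_semidef_mat A \<Longrightarrow> 0 \<le> trace A"
  unfolding trace_def by (intro sum_nonneg pos_semidef_mat_diag_nonneg)

lemma pos_semidef_mat_Cauchy_Schwarz:
  fixes A :: "real^'n^'n"
  assumes "pos_semidef_mat A"
  shows "(u \<bullet> (A *v v))^2 \<le> (u \<bullet> (A *v u)) * (v \<bullet> (A *v v))"
proof -
  define a where "a = v \<bullet> (A *v v)"
  define b where "b = u \<bullet> (A *v v)"
  define c where "c = u \<bullet> (A *v u)"
  have "v \<bullet> (A *v u) = u \<bullet> (A *v v)"
    using assms unfolding pos_semidef_mat_def
    by (metis dot_lmul_matrix inner_commute vector_transpose_matrix)
  then have "(u + t *\<^sub>R v) \<bullet> (A *v (u + t *\<^sub>R v)) = c + 2 * t * b + t^2 * a" for t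
    unfolding a_def b_def c_def
    by (simp add: matrix_vector_right_distrib matrix_vector_mult_scaleR
        inner_add_left inner_add_right algebra_simps power2_eq_square)
  then have quadratic: "0 \<le> c + 2 * t * b + t^2 * a" for t
    using assms unfolding pos_semidef_mat_def by metis
  have "0 \<le> a"
    using assms by (simp add: pos_semidef_mat_def a_def)
  have "b^2 \<le> c * a"
  proof (cases "a = 0")
    case True
    have "b = 0"
    proof (rule ccontr)
      assume "b \<noteq> 0"
      then have "c + 2 * (-(c+1)/(2*b)) * b = -1"
        by (simp add: field_simps)
      then show False
        using quadratic[of "-(c+1)/(2*b)"] True by simp
    qed
    then show ?thesis using True by simp
  next
    case False
    then have "0 < a" using \<open>0 \<le> a\<close> by simp
    have "0 \<le> c + 2 * (-b/a) * b + (-b/a)^2 * a"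
      by (rule quadratic)
    also have "\<dots> = c - b^2 / a"
      using \<open>0 < a\<close> by (simp add: field_simps power2_eq_square)
    finally show ?thesis
      using \<open>0 < a\<close> by (simp add: field_simps)
  qed
  then show ?thesis by (simp add: a_def b_def c_def)
qed

lemma pos_semidef_mat_form_le_trace:
  fixes A :: "real^'n^'n"
  assumes "pos_semidef_mat A"
  shows "d \<bullet> (A *v d) \<le> trace A * (norm d)^2"
proof -
  define q where "q = d \<bullet> (A *v d)"
  define w where "w = A *v d"
  have "0 \<le> q"
    using assms by (simp add: pos_semidef_mat_def q_def)
  have "(w $ i)^2 \<le> A $ i $ i * q" for i
    using pos_semidef_mat_Cauchy_Schwarz[OF assms, of "axis i 1" d]
    by (simp add: q_def w_def inner_axis' matrix_vector_mult_basis column_def)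
  then have "(norm w)^2 \<le> trace A * q"
    unfolding power2_norm_eq_inner inner_vec_def trace_def sum_distrib_right
    by (intro sum_mono) (simp add: power2_eq_square)
  moreover have "q \<le> norm d * norm w"
    unfolding q_def w_def by (rule order_trans[OF abs_ge_self Cauchy_Schwarz_ineq2])
  then have "q^2 \<le> (norm d)^2 * (norm w)^2"
    using power_mono[OF \<open>q \<le> norm d * norm w\<close> \<open>0 \<le> q\<close>, of 2]
    by (simp add: power_mult_distrib)
  ultimately have "q^2 \<le> (norm d)^2 * (trace A * q)"
    by (meson mult_left_mono order_trans zero_le_power2)
  then have "q * q \<le> (trace A * (norm d)^2) * q"
    by (simp add: power2_eq_square ac_simps)
  then show ?thesis
    using \<open>0 \<le> q\<close> pos_semidef_mat_trace_nonneg[OF assms]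
    by (cases "q = 0") (auto simp: q_def)
qed

section \<open>Gaussian densities\<close>

definition gaussian_density :: "real^'n^'n \<Rightarrow> real^'n \<Rightarrow> real" where
  "gaussian_density S z = (2 * pi) powr (- real CARD('n) / 2) * (det S) powr (-1/2)
      * exp (- (1/2) * (z \<bullet> (matrix_inv S *v z)))"

lemma gaussian_vec_eq_density:
  "gaussian_vec m S = density lborel (\<lambda>y. ennreal (gaussian_density S (y - m)))"
  by (simp add: gaussian_vec_def gaussian_density_def)

lemma sets_gaussian_vec [simp, measurable_cong]: "sets (gaussian_vec m S) = sets borel"
  by (simp add: gaussian_vec_def)

lemma space_gaussian_vec [simp]: "space (gaussian_vec m S) = UNIV"
  by (simp add: gaussian_vec_def)

lemma gaussian_density_nonneg: "0 \<le> gaussian_density S z"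
  by (simp add: gaussian_density_def)

lemma continuous_on_gaussian_density: "continuous_on UNIV (gaussian_density S)"
proof -
  have "continuous_on UNIV ((*v) (matrix_inv S))"
    by (intro linear_continuous_on matrix_vector_mul_bounded_linear)
  then show ?thesis
    unfolding gaussian_density_def by (intro continuous_intros) auto
qed

lemma borel_measurable_gaussian_density [measurable]: "gaussian_density S \<in> borel_measurable borel"
  by (rule borel_measurable_continuous_onI[OF continuous_on_gaussian_density])

lemma nn_integral_gaussian_density_shift:
  "(\<integral>\<^sup>+ y. ennreal (gaussian_density S (y - m)) \<partial>lborel) = (\<integral>\<^sup>+ y. ennreal (gaussian_density S y) \<partial>lborel)"
proof -
  have "(\<integral>\<^sup>+ y. ennreal (gaussian_density S y) \<partial>lborel)
      = (\<integral>\<^sup>+ y. ennreal (gaussian_density S y) \<partial>distr lborel borel ((+) (-m)))"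
    by (simp add: lborel_distr_plus)
  also have "\<dots> = (\<integral>\<^sup>+ y. ennreal (gaussian_density S (-m + y)) \<partial>lborel)"
    by (subst nn_integral_distr) auto
  finally show ?thesis by simp
qed

lemma emeasure_gaussian_vec:
  "B \<in> sets borel \<Longrightarrow>
    emeasure (gaussian_vec m S) B = (\<integral>\<^sup>+ z. ennreal (gaussian_density S (z - m)) * indicator B z \<partial>lborel)"
  by (simp add: gaussian_vec_eq_density emeasure_density)

lemma emeasure_gaussian_vec_space:
  "emeasure (gaussian_vec m S) UNIV = (\<integral>\<^sup>+ y. ennreal (gaussian_density S y) \<partial>lborel)"
  by (simp add: emeasure_gaussian_vec nn_integral_gaussian_density_shift)

lemma prob_space_gaussian_vec:
  "(\<integral>\<^sup>+ y. ennreal (gaussian_density S y) \<partial>lborel) = 1 \<Longrightarrow> prob_space (gaussian_vec m S)"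
  by (rule prob_spaceI) (simp add: emeasure_gaussian_vec_space)

lemma quadratic_form_parallelogram:
  fixes T :: "real^'n^'n"
  shows "(y - a) \<bullet> (T *v (y - a)) + (y - b) \<bullet> (T *v (y - b))
     = 2 * ((y - (1/2) *\<^sub>R (a + b)) \<bullet> (T *v (y - (1/2) *\<^sub>R (a + b)))) + ((a - b) \<bullet> (T *v (a - b))) / 2"
  by (simp add: matrix_vector_right_distrib matrix_vector_mult_diff_distrib matrix_vector_mult_scaleR
      inner_add_left inner_add_right inner_diff_left inner_diff_right algebra_simps; simp add: field_simps)

lemma gaussian_density_geometric_mean:
  fixes S :: "real^'n^'n"
  shows "sqrt (gaussian_density S (y - a) * gaussian_density S (y - b)) =
    exp (- ((a - b) \<bullet> (matrix_inv S *v (a - b))) / 8) * gaussian_density S (y - (1/2) *\<^sub>R (a + b))"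
proof -
  define C where "C = (2 * pi) powr (- real CARD('n) / 2) * (det S) powr (-1/2)"
  define T where "T = matrix_inv S"
  define Q where "Q = (y - (1/2) *\<^sub>R (a + b)) \<bullet> (T *v (y - (1/2) *\<^sub>R (a + b)))"
  define R where "R = (a - b) \<bullet> (T *v (a - b))"
  have density: "gaussian_density S z = C * exp (- (1/2) * (z \<bullet> (T *v z)))" for z
    by (simp add: gaussian_density_def C_def T_def)
  have "gaussian_density S (y - a) * gaussian_density S (y - b)
      = C^2 * exp (- (1/2) * ((y - a) \<bullet> (T *v (y - a)) + (y - b) \<bullet> (T *v (y - b))))"
    by (simp add: density power2_eq_square exp_add[symmetric] algebra_simps)
  also have "\<dots> = (C * exp (- (1/2) * Q) * exp (- R / 8))^2"
    unfolding quadratic_form_parallelogram Q_def[symmetric] R_def[symmetric]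
    by (simp add: power_mult_distrib exp_add[symmetric] exp_double[symmetric] power2_eq_square algebra_simps)
  finally show ?thesis
    by (simp add: C_def density Q_def R_def T_def)
qed

lemma two_point_Bhattacharyya_bound:
  fixes x y e :: real
  assumes "0 \<le> x" "x \<le> 1" "0 \<le> y" "y \<le> 1" "0 \<le> e"
    and "e \<le> sqrt (x * y) + sqrt ((1 - x) * (1 - y))"
  shows "(x - y)^2 \<le> 1 - e^2"
proof -
  define u where "u = x * (1 - x)"
  define v where "v = y * (1 - y)"
  have "0 \<le> u" "0 \<le> v"
    using assms by (auto simp: u_def v_def)
  have "e^2 \<le> (sqrt (x * y) + sqrt ((1 - x) * (1 - y)))^2"
    using assms by (intro power_mono) auto
  also have "\<dots> = x * y + (1 - x) * (1 - y) + 2 * sqrt (u * v)"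
  proof -
    have "sqrt (x * y) * sqrt ((1 - x) * (1 - y)) = sqrt (u * v)"
      by (simp add: u_def v_def real_sqrt_mult[symmetric] algebra_simps)
    then show ?thesis
      using assms by (simp add: power2_sum mult.assoc)
  qed
  also have "2 * sqrt (u * v) \<le> u + v"
    using \<open>0 \<le> u\<close> \<open>0 \<le> v\<close> arith_geo_mean_sqrt[of u v] by simp
  also have "x * y + (1 - x) * (1 - y) + (u + v) = 1 - (x - y)^2"
    by (simp add: u_def v_def power2_eq_square algebra_simps)
  finally show ?thesis by simp
qed

lemma ennreal_le_of_power2_le:
  assumes "I^2 \<le> ennreal s ^ 2" "0 \<le> s"
  shows "I \<le> ennreal s"
proof (cases I)
  case (real i)
  then have "ennreal (i^2) \<le> ennreal (s^2)"
    using assms by (simp add: ennreal_power)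
  then have "i \<le> s"
    using assms(2) by (metis ennreal_le_iff power2_le_imp_le zero_le_power2)
  then show ?thesis
    using real by simp
next
  case top
  then show ?thesis
    using assms by (simp add: ennreal_power top_unique)
qed

lemma gaussian_vec_Bhattacharyya_le:
  fixes S :: "real^'n^'n"
  assumes normalized: "(\<integral>\<^sup>+ y. ennreal (gaussian_density S y) \<partial>lborel) = 1"
    and B: "B \<in> sets borel"
  shows "(\<integral>\<^sup>+ z. ennreal (sqrt (gaussian_density S (z - a) * gaussian_density S (z - b))) * indicator B z \<partial>lborel)
     \<le> ennreal (sqrt (measure (gaussian_vec a S) B * measure (gaussian_vec b S) B))"
proof (rule ennreal_le_of_power2_le)
  interpret Na: prob_space "gaussian_vec a S" by (rule prob_space_gaussian_vec[OF normalized])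
  interpret Nb: prob_space "gaussian_vec b S" by (rule prob_space_gaussian_vec[OF normalized])
  define g where "g = (\<lambda>m z. ennreal (sqrt (gaussian_density S (z - m))) * indicator B z)"
  have [measurable]: "g m \<in> borel_measurable lborel" for m
    using B by (simp add: g_def)
  have "g a z * g b z = ennreal (sqrt (gaussian_density S (z - a) * gaussian_density S (z - b))) * indicator B z" for z
    by (auto simp: g_def indicator_def real_sqrt_mult ennreal_mult[symmetric] gaussian_density_nonneg)
  moreover have "g m z ^ 2 = ennreal (gaussian_density S (z - m)) * indicator B z" for m z
    by (auto simp: g_def indicator_def ennreal_power gaussian_density_nonneg)
  ultimately have "(\<integral>\<^sup>+ z. ennreal (sqrt (gaussian_density S (z - a) * gaussian_density S (z - b))) * indicator B z \<partial>lborel) ^ 2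
      \<le> emeasure (gaussian_vec a S) B * emeasure (gaussian_vec b S) B"
    using Cauchy_Schwarz_nn_integral[of "g a" lborel "g b"] B by (simp add: emeasure_gaussian_vec)
  then show "(\<integral>\<^sup>+ z. ennreal (sqrt (gaussian_density S (z - a) * gaussian_density S (z - b))) * indicator B z \<partial>lborel) ^ 2
      \<le> ennreal (sqrt (measure (gaussian_vec a S) B * measure (gaussian_vec b S) B)) ^ 2"
    by (simp add: Na.emeasure_eq_measure Nb.emeasure_eq_measure ennreal_mult[symmetric] ennreal_power)
qed simp

lemma gaussian_vec_measure_diff_le:
  fixes S :: "real^'n^'n"
  assumes pd: "pos_def_mat S"
    and normalized: "(\<integral>\<^sup>+ y. ennreal (gaussian_density S y) \<partial>lborel) = 1"
    and A: "A \<in> sets borel"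
  shows "\<bar>measure (gaussian_vec a S) A - measure (gaussian_vec b S) A\<bar>
           \<le> sqrt (trace (matrix_inv S)) / 2 * norm (a - b)"
proof -
  interpret Na: prob_space "gaussian_vec a S" by (rule prob_space_gaussian_vec[OF normalized])
  interpret Nb: prob_space "gaussian_vec b S" by (rule prob_space_gaussian_vec[OF normalized])
  define x where "x = measure (gaussian_vec a S) A"
  define y where "y = measure (gaussian_vec b S) A"
  define R where "R = (a - b) \<bullet> (matrix_inv S *v (a - b))"
  define h where "h = (\<lambda>z. sqrt (gaussian_density S (z - a) * gaussian_density S (z - b)))"
  have [measurable]: "h \<in> borel_measurable borel"
    unfolding h_def by measurable
  have "ennreal (exp (- R / 8))
      = (\<integral>\<^sup>+ z. ennreal (exp (- R / 8)) * ennreal (gaussian_density S (z - (1/2) *\<^sub>R (a + b))) \<partial>lborel)"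
    by (simp add: nn_integral_cmult nn_integral_gaussian_density_shift normalized)
  also have "\<dots> = (\<integral>\<^sup>+ z. ennreal (h z) * indicator A z + ennreal (h z) * indicator (- A) z \<partial>lborel)"
    by (intro nn_integral_cong) (simp add: h_def gaussian_density_geometric_mean R_def
        ennreal_mult[symmetric] gaussian_density_nonneg split: split_indicator)
  also have "\<dots> = (\<integral>\<^sup>+ z. ennreal (h z) * indicator A z \<partial>lborel) + (\<integral>\<^sup>+ z. ennreal (h z) * indicator (- A) z \<partial>lborel)"
    using A by (intro nn_integral_add) auto
  also have "\<dots> \<le> ennreal (sqrt (x * y)) + ennreal (sqrt ((1 - x) * (1 - y)))"
    using gaussian_vec_Bhattacharyya_le[OF normalized A, of a b]
      gaussian_vec_Bhattacharyya_le[OF normalized borel_comp[OF A], of a b]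
      Na.prob_compl[of A] Nb.prob_compl[of A] A
    by (intro add_mono) (simp_all add: h_def x_def y_def Compl_eq_Diff_UNIV)
  also have "\<dots> = ennreal (sqrt (x * y) + sqrt ((1 - x) * (1 - y)))"
    using Na.prob_le_1[of A] Nb.prob_le_1[of A]
    by (intro ennreal_plus[symmetric]) (auto simp: x_def y_def)
  finally have "exp (- R / 8) \<le> sqrt (x * y) + sqrt ((1 - x) * (1 - y))"
    using Na.prob_le_1[of A] Nb.prob_le_1[of A]
    by (subst (asm) ennreal_le_iff) (auto simp: x_def y_def)
  then have "(x - y)^2 \<le> 1 - (exp (- R / 8))^2"
    using Na.prob_le_1[of A] Nb.prob_le_1[of A]
    by (intro two_point_Bhattacharyya_bound) (simp_all add: x_def y_def)
  also have "\<dots> = 1 - exp (- R / 4)"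
    by (simp add: power2_eq_square exp_add[symmetric])
  also have "\<dots> \<le> R / 4"
    using exp_ge_add_one_self[of "- R / 4"] by simp
  also have "\<dots> \<le> trace (matrix_inv S) * (norm (a - b))^2 / 4"
    using pos_semidef_mat_form_le_trace[OF pos_def_mat_imp_pos_semidef_inv[OF pd], of "a - b"]
    by (simp add: R_def)
  finally have "\<bar>x - y\<bar> \<le> sqrt (trace (matrix_inv S) * (norm (a - b))^2 / 4)"
    by (metis real_sqrt_abs real_sqrt_le_mono)
  then show ?thesis
    by (simp add: x_def y_def real_sqrt_mult real_sqrt_divide)
qed

section \<open>The Gaussian transition kernel\<close>

definition gaussian_kernel :: "(real^'p \<Rightarrow> real^'n) \<Rightarrow> real^'n^'n \<Rightarrow> real^'p \<Rightarrow> ((real^'p) \<times> (real^'n)) measure" where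
  "gaussian_kernel f S = (\<lambda>x. distr (gaussian_vec (f x) S) (borel \<Otimes>\<^sub>M borel) (\<lambda>y. (x, y)))"

lemma sets_gaussian_kernel [simp]: "sets (gaussian_kernel f S x) = sets (borel \<Otimes>\<^sub>M borel)"
  by (simp add: gaussian_kernel_def)

lemma space_gaussian_kernel [simp]: "space (gaussian_kernel f S x) = UNIV"
  by (simp add: gaussian_kernel_def space_pair_measure)

lemma emeasure_gaussian_kernel:
  "B \<in> sets (borel \<Otimes>\<^sub>M borel) \<Longrightarrow>
    emeasure (gaussian_kernel f S x) B = emeasure (gaussian_vec (f x) S) (Pair x -` B)"
  by (simp add: gaussian_kernel_def emeasure_distr measurable_cong_sets[OF sets_gaussian_vec refl])

lemma emeasure_gaussian_kernel_space:
  fixes f :: "real^'p \<Rightarrow> real^'n"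
  shows "emeasure (gaussian_kernel f S x) UNIV = (\<integral>\<^sup>+ y. ennreal (gaussian_density S y) \<partial>lborel)"
proof -
  have "UNIV \<in> sets (borel \<Otimes>\<^sub>M borel :: ((real^'p) \<times> (real^'n)) measure)"
    by (metis sets.top space_pair_measure space_borel UNIV_Times_UNIV)
  then show ?thesis
    by (simp add: emeasure_gaussian_kernel emeasure_gaussian_vec_space)
qed

lemma measurable_emeasure_gaussian_vec_Pair:
  fixes f :: "real^'p \<Rightarrow> real^'n" and S :: "real^'n^'n"
  assumes f[measurable]: "f \<in> borel_measurable borel" and B: "B \<in> sets (borel \<Otimes>\<^sub>M borel)"
  shows "(\<lambda>x. emeasure (gaussian_vec (f x) S) (Pair x -` B)) \<in> borel_measurable borel"
proof -
  have [measurable]: "B \<in> sets (borel \<Otimes>\<^sub>M lborel)"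
    using B by simp
  have "(\<lambda>x. \<integral>\<^sup>+ z. ennreal (gaussian_density S (z - f x)) * indicator B (x, z) \<partial>lborel) \<in> borel_measurable borel"
    by (rule lborel.borel_measurable_nn_integral) measurable
  moreover have "emeasure (gaussian_vec (f x) S) (Pair x -` B)
      = (\<integral>\<^sup>+ z. ennreal (gaussian_density S (z - f x)) * indicator B (x, z) \<partial>lborel)" for x
    using sets_Pair1[OF B] by (simp add: emeasure_gaussian_vec indicator_def)
  ultimately show ?thesis
    by simp
qed

lemma gaussian_kernel_measurable:
  fixes f :: "real^'p \<Rightarrow> real^'n" and S :: "real^'n^'n"
  assumes f: "f \<in> borel_measurable borel"
    and subnormalized: "(\<integral>\<^sup>+ y. ennreal (gaussian_density S y) \<partial>lborel) \<le> 1"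
    and P: "sets P = sets borel"
  shows "gaussian_kernel f S \<in> measurable P (subprob_algebra (borel \<Otimes>\<^sub>M borel))"
proof (rule measurable_subprob_algebra)
  fix x
  show "subprob_space (gaussian_kernel f S x)"
    using subnormalized by (intro subprob_spaceI) (simp_all add: emeasure_gaussian_kernel_space)
next
  fix B :: "((real^'p) \<times> (real^'n)) set"
  assume "B \<in> sets (borel \<Otimes>\<^sub>M borel)"
  then show "(\<lambda>x. emeasure (gaussian_kernel f S x) B) \<in> borel_measurable P"
    unfolding emeasure_gaussian_kernel[OF \<open>B \<in> _\<close>] measurable_cong_sets[OF P refl]
    by (rule measurable_emeasure_gaussian_vec_Pair[OF f])
qed simp

lemma distr_eq_null_measure:
  assumes "\<And>x. x \<in> space P \<Longrightarrow> K x \<notin> space N"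
  shows "distr P N K = null_measure N"
  unfolding distr_def null_measure_def
proof (rule measure_of_eq)
  show "sets N \<subseteq> Pow (space N)"
    by (rule sets.space_closed)
  fix a assume "a \<in> sigma_sets (space N) (sets N)"
  then have "K -` a \<inter> space P = {}"
    using assms sets.sets_into_space by (auto simp: sets.sigma_sets_eq)
  then show "emeasure P (K -` a \<inter> space P) = 0"
    by simp
qed

text \<open>
  The Gaussian integral is never computed: normalisation is forced by the joint law being a
  probability measure. If the total mass exceeded 1, the kernel would not map into the
  subprobability measures and the bind would degenerate to the null measure.
\<close>

lemma gaussian_density_normalized_if_bind:
  fixes f :: "real^'p \<Rightarrow> real^'n" and S :: "real^'n^'n"
  assumes P: "prob_space P" "sets P = sets borel" and f: "f \<in> borel_measurable borel"
    and bind_prob: "prob_space (P \<bind> gaussian_kernel f S)"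
  shows "(\<integral>\<^sup>+ y. ennreal (gaussian_density S y) \<partial>lborel) = 1"
proof -
  define Z where "Z = (\<integral>\<^sup>+ y. ennreal (gaussian_density S y) \<partial>lborel)"
  have space_P: "space P = UNIV"
    using sets_eq_imp_space_eq[OF P(2)] by simp
  have "emeasure (P \<bind> gaussian_kernel f S) UNIV = 1"
    using prob_space.emeasure_space_1[OF bind_prob] space_P by (simp add: space_pair_measure)
  moreover have "emeasure (P \<bind> gaussian_kernel f S) UNIV = (if Z \<le> 1 then Z else 0)"
  proof (cases "Z \<le> 1")
    case True
    have "gaussian_kernel f S \<in> measurable P (subprob_algebra (borel \<Otimes>\<^sub>M borel))"
      using True by (intro gaussian_kernel_measurable f P(2)) (simp add: Z_def)
    from emeasure_bind[OF _ this sets.top] show ?thesis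
      using True prob_space.emeasure_space_1[OF P(1)]
      by (simp add: emeasure_gaussian_kernel_space Z_def space_P space_pair_measure)
  next
    case False
    define N where "N = subprob_algebra (borel \<Otimes>\<^sub>M borel :: ((real^'p) \<times> (real^'n)) measure)"
    have "gaussian_kernel f S x \<notin> space N" for x
    proof
      assume "gaussian_kernel f S x \<in> space N"
      then have "emeasure (gaussian_kernel f S x) UNIV \<le> 1"
        by (simp add: N_def space_subprob_algebra subprob_space.subprob_emeasure_le_1)
      then show False
        using False by (simp add: emeasure_gaussian_kernel_space Z_def)
    qed
    then have "distr P N (gaussian_kernel f S) = null_measure N"
      by (rule distr_eq_null_measure)
    moreover have "P \<bind> gaussian_kernel f S = join (distr P N (gaussian_kernel f S))"
      unfolding bind_nonempty[of P, unfolded space_P, simplified] N_def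
      by (metis sets_gaussian_kernel subprob_algebra_cong)
    ultimately show ?thesis
      using False emeasure_join[of "null_measure N" "borel \<Otimes>\<^sub>M borel", OF _ sets.top]
      by (simp add: N_def space_pair_measure)
  qed
  ultimately show ?thesis
    by (simp add: Z_def split: if_splits)
qed

lemma measure_distr_eq_integral_gaussian_vec:
  fixes X0 :: "'w \<Rightarrow> real^'p" and X1 :: "'w \<Rightarrow> real^'n" and f :: "real^'p \<Rightarrow> real^'n"
    and S :: "real^'n^'n"
  assumes M: "prob_space M" and [measurable]: "X0 \<in> borel_measurable M" "X1 \<in> borel_measurable M"
    and f: "f \<in> borel_measurable borel"
    and normalized: "(\<integral>\<^sup>+ y. ennreal (gaussian_density S y) \<partial>lborel) = 1"
    and joint: "distr M (borel \<Otimes>\<^sub>M borel) (\<lambda>\<omega>. (X0 \<omega>, X1 \<omega>)) = distr M borel X0 \<bind> gaussian_kernel f S"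
    and B: "B \<in> sets borel"
  shows "measure (distr M borel X1) B = (\<integral>x. measure (gaussian_vec (f x) S) B \<partial>distr M borel X0)"
proof -
  interpret M: prob_space M by (rule M)
  interpret P: prob_space "distr M borel X0" by (rule M.prob_space_distr) simp
  have UB: "UNIV \<times> B \<in> sets (borel \<Otimes>\<^sub>M borel :: ((real^'p) \<times> (real^'n)) measure)"
    using B by (intro pair_measureI) auto
  have "emeasure (distr M borel X1) B = emeasure (distr M (borel \<Otimes>\<^sub>M borel) (\<lambda>\<omega>. (X0 \<omega>, X1 \<omega>))) (UNIV \<times> B)"
    using B UB by (simp add: emeasure_distr vimage_def Int_def)
  also have "\<dots> = (\<integral>\<^sup>+ x. emeasure (gaussian_kernel f S x) (UNIV \<times> B) \<partial>distr M borel X0)"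
    unfolding joint using normalized
    by (intro emeasure_bind[OF _ _ UB] gaussian_kernel_measurable f) simp_all
  also have "\<dots> = (\<integral>\<^sup>+ x. ennreal (measure (gaussian_vec (f x) S) B) \<partial>distr M borel X0)"
    using prob_space_gaussian_vec[OF normalized, unfolded prob_space_def]
    by (intro nn_integral_cong) (simp add: emeasure_gaussian_kernel UB finite_measure.emeasure_eq_measure)
  also have "\<dots> = ennreal (\<integral>x. measure (gaussian_vec (f x) S) B \<partial>distr M borel X0)"
  proof (rule nn_integral_eq_integral)
    have "(\<lambda>x. measure (gaussian_vec (f x) S) B) \<in> borel_measurable borel"
      using measurable_emeasure_gaussian_vec_Pair[OF f UB, of S] by (simp add: measure_def)
    then show "integrable (distr M borel X0) (\<lambda>x. measure (gaussian_vec (f x) S) B)"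
      using prob_space.prob_le_1[OF prob_space_gaussian_vec[OF normalized]]
      by (intro P.integrable_const_bound[where B=1]) auto
  qed simp
  finally show ?thesis
    using B by (simp add: measure_def integral_nonneg)
qed

section \<open>Couplings\<close>

lemma lipschitz_measure_gaussian_vec:
  fixes f :: "real^'p \<Rightarrow> real^'n" and S :: "real^'n^'n"
  assumes lip: "L-lipschitz_on UNIV f" and pd: "pos_def_mat S"
    and normalized: "(\<integral>\<^sup>+ y. ennreal (gaussian_density S y) \<partial>lborel) = 1"
    and B: "B \<in> sets borel"
  shows "(L * sqrt (trace (matrix_inv S)) / 2)-lipschitz_on UNIV (\<lambda>x. measure (gaussian_vec (f x) S) B)"
proof (rule lipschitz_onI)
  have trace_nonneg: "0 \<le> trace (matrix_inv S)"
    by (rule pos_semidef_mat_trace_nonneg[OF pos_def_mat_imp_pos_semidef_inv[OF pd]])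
  then show "0 \<le> L * sqrt (trace (matrix_inv S)) / 2"
    using lipschitz_on_nonneg[OF lip] by simp
  fix u v :: "real^'p"
  have "dist (measure (gaussian_vec (f u) S) B) (measure (gaussian_vec (f v) S) B)
      \<le> sqrt (trace (matrix_inv S)) / 2 * dist (f u) (f v)"
    unfolding dist_real_def dist_norm by (rule gaussian_vec_measure_diff_le[OF pd normalized B])
  also have "\<dots> \<le> sqrt (trace (matrix_inv S)) / 2 * (L * dist u v)"
    using lipschitz_onD[OF lip] trace_nonneg by (intro mult_left_mono) auto
  finally show "dist (measure (gaussian_vec (f u) S) B) (measure (gaussian_vec (f v) S) B)
      \<le> L * sqrt (trace (matrix_inv S)) / 2 * dist u v"
    by (simp add: ac_simps)
qed

lemma pair_measure_in_couplings:
  fixes P Q :: "('a::real_normed_vector) measure"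
  assumes "prob_space P" "prob_space Q" and sets_P: "sets P = sets borel" and sets_Q: "sets Q = sets borel"
  shows "P \<Otimes>\<^sub>M Q \<in> couplings P Q"
proof -
  interpret PQ: pair_prob_space P Q
    by (simp add: assms pair_prob_space.intro pair_sigma_finite_def prob_space_imp_sigma_finite)
  have sets_PQ: "sets (P \<Otimes>\<^sub>M Q) = sets (borel \<Otimes>\<^sub>M borel)"
    by (rule sets_pair_measure_cong[OF sets_P sets_Q])
  have "distr (P \<Otimes>\<^sub>M Q) borel fst = distr (P \<Otimes>\<^sub>M Q) P fst"
    by (rule distr_cong) (simp_all add: sets_P)
  also have "\<dots> = P"
    by (rule PQ.M2.distr_pair_fst)
  finally have fst_marginal: "distr (P \<Otimes>\<^sub>M Q) borel fst = P" .
  have "distr (P \<Otimes>\<^sub>M Q) borel snd = Q"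
  proof (rule measure_eqI)
    fix A assume "A \<in> sets (distr (P \<Otimes>\<^sub>M Q) borel snd)"
    then have A: "A \<in> sets Q"
      by (simp add: sets_Q)
    have "emeasure (distr (P \<Otimes>\<^sub>M Q) borel snd) A = emeasure (P \<Otimes>\<^sub>M Q) (snd -` A \<inter> space (P \<Otimes>\<^sub>M Q))"
      using A sets_Q by (intro emeasure_distr) (auto simp: measurable_cong_sets[OF sets_PQ refl])
    also have "snd -` A \<inter> space (P \<Otimes>\<^sub>M Q) = space P \<times> A"
      using sets.sets_into_space[OF A] by (auto simp: space_pair_measure)
    also have "emeasure (P \<Otimes>\<^sub>M Q) (space P \<times> A) = emeasure Q A"
      using A by (simp add: PQ.M2.emeasure_pair_measure_Times PQ.M1.emeasure_space_1)
    finally show "emeasure (distr (P \<Otimes>\<^sub>M Q) borel snd) A = emeasure Q A" .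
  qed (simp add: sets_Q)
  then show ?thesis
    unfolding couplings_def using sets_PQ fst_marginal PQ.prob_space_axioms by auto
qed

lemma lipschitz_integral_diff_le_coupling:
  fixes g :: "'a::{real_normed_vector, second_countable_topology} \<Rightarrow> real"
  assumes \<gamma>: "\<gamma> \<in> couplings P Q" and lip: "c-lipschitz_on UNIV g" and bounded: "\<And>x. \<bar>g x\<bar> \<le> K"
  shows "ennreal \<bar>(\<integral>x. g x \<partial>P) - (\<integral>x. g x \<partial>Q)\<bar> \<le> ennreal c * (\<integral>\<^sup>+ z. ennreal (norm (fst z - snd z)) \<partial>\<gamma>)"
proof -
  have "prob_space \<gamma>" and sets_\<gamma>: "sets \<gamma> = sets (borel \<Otimes>\<^sub>M borel)"
    and fst_marginal: "distr \<gamma> borel fst = P" and snd_marginal: "distr \<gamma> borel snd = Q"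
    using \<gamma> by (auto simp: couplings_def)
  interpret \<gamma>: prob_space \<gamma> by fact
  have [measurable]: "g \<in> borel_measurable borel"
    by (rule borel_measurable_continuous_onI[OF lipschitz_on_continuous_on[OF lip]])
  have [measurable]: "fst \<in> measurable \<gamma> borel" "snd \<in> measurable \<gamma> borel"
    by (simp_all add: measurable_cong_sets[OF sets_\<gamma> refl])
  have integrable: "integrable \<gamma> (\<lambda>z. g (fst z))" "integrable \<gamma> (\<lambda>z. g (snd z))"
    using bounded by (auto intro!: \<gamma>.integrable_const_bound[where B=K])
  have "(\<integral>x. g x \<partial>P) - (\<integral>x. g x \<partial>Q) = (\<integral>z. g (fst z) - g (snd z) \<partial>\<gamma>)"
    unfolding fst_marginal[symmetric] snd_marginal[symmetric] using integrable
    by (simp add: integral_distr)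
  then have "ennreal \<bar>(\<integral>x. g x \<partial>P) - (\<integral>x. g x \<partial>Q)\<bar> \<le> ennreal (\<integral>z. \<bar>g (fst z) - g (snd z)\<bar> \<partial>\<gamma>)"
    by (simp add: ennreal_leI integral_abs_bound)
  also have "\<dots> = (\<integral>\<^sup>+ z. ennreal \<bar>g (fst z) - g (snd z)\<bar> \<partial>\<gamma>)"
    using integrable by (intro nn_integral_eq_integral[symmetric]) auto
  also have "\<dots> \<le> (\<integral>\<^sup>+ z. ennreal c * ennreal (norm (fst z - snd z)) \<partial>\<gamma>)"
    using lipschitz_onD[OF lip] lipschitz_on_nonneg[OF lip]
    by (intro nn_integral_mono) (simp add: ennreal_mult[symmetric] dist_norm dist_real_def)
  also have "\<dots> = ennreal c * (\<integral>\<^sup>+ z. ennreal (norm (fst z - snd z)) \<partial>\<gamma>)"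
    by (rule nn_integral_cmult) simp
  finally show ?thesis .
qed

lemma tv_dist_le_ennreal:
  assumes "\<And>A. A \<in> sets \<mu> \<Longrightarrow> ennreal \<bar>measure \<mu> A - measure \<nu> A\<bar> \<le> r"
  shows "ennreal (tv_dist \<mu> \<nu>) \<le> r"
proof (cases r)
  case (real r')
  then have "tv_dist \<mu> \<nu> \<le> r'"
    using assms unfolding tv_dist_def by (intro cSUP_least) (auto simp: ennreal_le_iff)
  then show ?thesis
    using real by (simp add: ennreal_leI)
qed simp

lemma ennreal_mult_INF:
  fixes I :: "'g \<Rightarrow> ennreal"
  assumes "G \<noteq> {}"
  shows "ennreal c * (INF \<gamma>\<in>G. I \<gamma>) = (INF \<gamma>\<in>G. ennreal c * I \<gamma>)"
proof -
  have "continuous (at_right (Inf (I ` G))) (\<lambda>x. ennreal c * x)"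
    unfolding continuous_within by (intro ennreal_tendsto_cmult tendsto_ident_at) simp
  then show ?thesis
    using continuous_at_Inf_mono[of "\<lambda>x. ennreal c * x" "I ` G"] assms
    by (simp add: mono_def mult_left_mono image_image)
qed

lemma tv_dist_gaussian_mixtures_le_coupling:
  fixes X0 :: "'w \<Rightarrow> real^'p" and X1 :: "'w \<Rightarrow> real^'n"
    and Y0 :: "'v \<Rightarrow> real^'p" and Y1 :: "'v \<Rightarrow> real^'n"
    and f :: "real^'p \<Rightarrow> real^'n" and S :: "real^'n^'n"
  assumes M: "prob_space M" "prob_space M'"
    and [measurable]: "X0 \<in> borel_measurable M" "X1 \<in> borel_measurable M"
      "Y0 \<in> borel_measurable M'" "Y1 \<in> borel_measurable M'"
    and lip: "L-lipschitz_on UNIV f" and pd: "pos_def_mat S"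
    and normalized: "(\<integral>\<^sup>+ y. ennreal (gaussian_density S y) \<partial>lborel) = 1"
    and joint_X: "distr M (borel \<Otimes>\<^sub>M borel) (\<lambda>\<omega>. (X0 \<omega>, X1 \<omega>)) = distr M borel X0 \<bind> gaussian_kernel f S"
    and joint_Y: "distr M' (borel \<Otimes>\<^sub>M borel) (\<lambda>\<omega>. (Y0 \<omega>, Y1 \<omega>)) = distr M' borel Y0 \<bind> gaussian_kernel f S"
    and \<gamma>: "\<gamma> \<in> couplings (distr M borel X0) (distr M' borel Y0)"
  shows "ennreal (tv_dist (distr M borel X1) (distr M' borel Y1))
      \<le> ennreal (L * sqrt (trace (matrix_inv S)) / 2) * (\<integral>\<^sup>+ z. ennreal (norm (fst z - snd z)) \<partial>\<gamma>)"
proof (rule tv_dist_le_ennreal)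
  have [measurable]: "f \<in> borel_measurable borel"
    by (rule borel_measurable_continuous_onI[OF lipschitz_on_continuous_on[OF lip]])
  fix B assume "B \<in> sets (distr M borel X1)"
  then have B: "B \<in> sets borel" by simp
  show "ennreal \<bar>measure (distr M borel X1) B - measure (distr M' borel Y1) B\<bar>
      \<le> ennreal (L * sqrt (trace (matrix_inv S)) / 2) * (\<integral>\<^sup>+ z. ennreal (norm (fst z - snd z)) \<partial>\<gamma>)"
    using measure_distr_eq_integral_gaussian_vec[OF M(1) _ _ _ normalized joint_X B]
      measure_distr_eq_integral_gaussian_vec[OF M(2) _ _ _ normalized joint_Y B]
      lipschitz_integral_diff_le_coupling[OF \<gamma> lipschitz_measure_gaussian_vec[OF lip pd normalized B], of 1]
      prob_space.prob_le_1[OF prob_space_gaussian_vec[OF normalized]]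
    by simp
qed

theorem lemma1:
  fixes M :: "'w measure" and M' :: "'v measure"
    and X0 :: "'w \<Rightarrow> real^'p" and X1 :: "'w \<Rightarrow> real^'n"
    and Y0 :: "'v \<Rightarrow> real^'p" and Y1 :: "'v \<Rightarrow> real^'n"
    and f :: "real^'p \<Rightarrow> real^'n" and L :: real and \<Sigma> :: "real^'n^'n"
  assumes "prob_space M" and "prob_space M'"
    and "X0 \<in> borel_measurable M" and "X1 \<in> borel_measurable M"
    and "Y0 \<in> borel_measurable M'" and "Y1 \<in> borel_measurable M'"
    and "absolutely_continuous lborel (distr M borel X0)"
    and "absolutely_continuous lborel (distr M' borel Y0)"
    and "L-lipschitz_on UNIV f"
    and "pos_def_mat \<Sigma>"
    and "distr M (borel \<Otimes>\<^sub>M borel) (\<lambda>\<omega>. (X0 \<omega>, X1 \<omega>)) =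
           bind (distr M borel X0) (\<lambda>x. distr (gaussian_vec (f x) \<Sigma>) (borel \<Otimes>\<^sub>M borel) (\<lambda>y. (x, y)))"
    and "distr M' (borel \<Otimes>\<^sub>M borel) (\<lambda>\<omega>. (Y0 \<omega>, Y1 \<omega>)) =
           bind (distr M' borel Y0) (\<lambda>x. distr (gaussian_vec (f x) \<Sigma>) (borel \<Otimes>\<^sub>M borel) (\<lambda>y. (x, y)))"
  shows "ennreal (tv_dist (distr M borel X1) (distr M' borel Y1))
           \<le> ennreal (L * sqrt (trace (matrix_inv \<Sigma>)) / 2)
              * wasserstein1 (distr M borel X0) (distr M' borel Y0)"
proof -
  note [measurable] = assms(3-6)
  note M = assms(1,2) and lip = assms(9) and pd = assms(10)
  note joint_X = assms(11)[folded gaussian_kernel_def] and joint_Y = assms(12)[folded gaussian_kernel_def]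
  define P where "P = distr M borel X0"
  define Q where "Q = distr M' borel Y0"
  have "prob_space P" "prob_space Q"
    unfolding P_def Q_def using M by (simp_all add: prob_space.prob_space_distr)
  have "prob_space (P \<bind> gaussian_kernel f \<Sigma>)"
    unfolding P_def joint_X[symmetric] by (rule prob_space.prob_space_distr[OF M(1)]) simp
  then have normalized: "(\<integral>\<^sup>+ y. ennreal (gaussian_density \<Sigma> y) \<partial>lborel) = 1"
    using \<open>prob_space P\<close> lipschitz_on_continuous_on[OF lip]
    by (intro gaussian_density_normalized_if_bind[of P f]) (simp_all add: P_def borel_measurable_continuous_onI)
  have "ennreal (tv_dist (distr M borel X1) (distr M' borel Y1))
      \<le> (INF \<gamma>\<in>couplings P Q. ennreal (L * sqrt (trace (matrix_inv \<Sigma>)) / 2) * (\<integral>\<^sup>+ z. ennreal (norm (fst z - snd z)) \<partial>\<gamma>))"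
    unfolding P_def Q_def
    by (intro INF_greatest tv_dist_gaussian_mixtures_le_coupling[OF M _ _ _ _ lip pd normalized joint_X joint_Y]) simp_all
  also have "\<dots> = ennreal (L * sqrt (trace (matrix_inv \<Sigma>)) / 2) * wasserstein1 P Q"
    using pair_measure_in_couplings[OF \<open>prob_space P\<close> \<open>prob_space Q\<close>]
    unfolding wasserstein1_def by (subst ennreal_mult_INF) (auto simp: P_def Q_def)
  finally show ?thesis
    by (simp add: P_def Q_def)
qed

end
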